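(* Let $G$ be a finite strongly regular graph that is not isomorphic to $C_3$, $C_4$, $C_5$, nor to a disjoint union of copies of $C_3$. Then there is $m\in\{0,1,2\}$ such that $\mathrm{L}^{(m)}(G)$ is not strongly regular; i.e. applying at most two line graph transformations to $G$ yields a graph that is not strongly regular.
   Context: A finite simple graph on $v\ge1$ vertices is strongly regular with parameters $(v,k,\lambda,\mu)$, where $k,\lambda,\mu$ are nonnegative integers, if every vertex has degree $k$, every pair of adjacent vertices has exactly $\lambda$ common neighbours, and every pair of distinct non-adjacent vertices has exactly $\mu$ common neighbours; by convention the graph with no vertices is not strongly regular. $G$ need not be connected. $\mathrm{L}(G)$ has vertex set $E(G)$, two vertices adjacent iff the corresponding edges share an endpoint; $\mathrm{L}^{(0)}(G)=G$ and $\mathrm{L}^{(m)}=\mathrm{L}\circ\mathrm{L}^{(m-1)}$. $C_n$ is the cycle on $n$ vertices. *)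

theory Defs
  imports Main
begin

type_synonym 'a graph = "'a set \<times> 'a set set"

definition verts :: "'a graph \<Rightarrow> 'a set" where "verts G = fst G"
definition edges :: "'a graph \<Rightarrow> 'a set set" where "edges G = snd G"

definition finite_simple_graph :: "'a graph \<Rightarrow> bool" where
  "finite_simple_graph G \<longleftrightarrow> finite (verts G) \<and>
     (\<forall>e\<in>edges G. e \<subseteq> verts G \<and> card e = 2)"

definition adj :: "'a graph \<Rightarrow> 'a \<Rightarrow> 'a \<Rightarrow> bool" where
  "adj G u v \<longleftrightarrow> {u, v} \<in> edges G"

definition neighbours :: "'a graph \<Rightarrow> 'a \<Rightarrow> 'a set" where
  "neighbours G v = {u \<in> verts G. adj G u v}"

definition srg_params :: "'a graph \<Rightarrow> nat \<Rightarrow> nat \<Rightarrow> nat \<Rightarrow> nat \<Rightarrow> bool" where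
  "srg_params G n k l m \<longleftrightarrow> finite_simple_graph G \<and> card (verts G) = n \<and> n \<ge> 1 \<and>
     (\<forall>v\<in>verts G. card (neighbours G v) = k) \<and>
     (\<forall>u\<in>verts G. \<forall>v\<in>verts G. u \<noteq> v \<and> adj G u v \<longrightarrow>
          card (neighbours G u \<inter> neighbours G v) = l) \<and>
     (\<forall>u\<in>verts G. \<forall>v\<in>verts G. u \<noteq> v \<and> \<not> adj G u v \<longrightarrow>
          card (neighbours G u \<inter> neighbours G v) = m)"

definition strongly_regular :: "'a graph \<Rightarrow> bool" where
  "strongly_regular G \<longleftrightarrow> (\<exists>n k l m. srg_params G n k l m)"

definition line_graph :: "'a graph \<Rightarrow> 'a set graph" where
  "line_graph G = (edges G,
     {{e, f} | e f. e \<in> edges G \<and> f \<in> edges G \<and> e \<noteq> f \<and> e \<inter> f \<noteq> {}})"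

definition graph_iso :: "'a graph \<Rightarrow> 'b graph \<Rightarrow> bool" where
  "graph_iso G H \<longleftrightarrow> (\<exists>f. bij_betw f (verts G) (verts H) \<and>
     (\<forall>u\<in>verts G. \<forall>v\<in>verts G. adj G u v \<longleftrightarrow> adj H (f u) (f v)))"

definition cycle_graph :: "nat \<Rightarrow> nat graph" where
  "cycle_graph n = ({0..<n}, {{i, (i + 1) mod n} | i. i < n})"

definition triangles :: "nat \<Rightarrow> (nat \<times> nat) graph" where
  "triangles k = ({0..<k} \<times> {0..<3},
     {{(i, j), (i, (j + 1) mod 3)} | i j. i < k \<and> j < 3})"

end

theory Submission
  imports Defs
begin

text \<open>In a line graph \<open>L(H)\<close>, the adjacent vertices \<open>{e,f}\<close> and \<open>{f,g}\<close> (two edges of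
  \<open>H\<close> at \<open>f\<close>) have \<open>deg f - 2\<close> common neighbours, plus one when \<open>e\<close> and \<open>g\<close> are
  adjacent. So if \<open>L(L(G))\<close> is strongly regular, no vertex of \<open>L(G)\<close> has neighbours
  \<open>e, g, g'\<close> with \<open>e\<close> adjacent to \<open>g\<close> but not to \<open>g'\<close>; such a configuration exists
  whenever \<open>G\<close> is \<open>k\<close>-regular with \<open>k \<ge> 3\<close>, while \<open>k \<ge> 2\<close> because \<open>L(L(G))\<close> has a
  vertex. A strongly regular graph of degree 2 with a triangle has \<open>\<lambda> = 1\<close> and is a disjoint
  union of triangles (which covers \<open>C\<^sub>3\<close>); without a triangle it has \<open>\<mu> \<ge> 1\<close>, hence
  diameter 2, and is \<open>C\<^sub>4\<close> or \<open>C\<^sub>5\<close>.\<close>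

lemma adj_commute: "adj G u v \<longleftrightarrow> adj G v u"
  by (simp add: adj_def insert_commute)

lemma mem_neighbours: "u \<in> neighbours G v \<longleftrightarrow> u \<in> verts G \<and> adj G u v"
  by (simp add: neighbours_def)

lemma not_adj_self: "finite_simple_graph G \<Longrightarrow> \<not> adj G u u"
  unfolding finite_simple_graph_def adj_def by fastforce

lemma adj_in_verts:
  "finite_simple_graph G \<Longrightarrow> adj G u v \<Longrightarrow> u \<in> verts G \<and> v \<in> verts G"
  unfolding finite_simple_graph_def adj_def by blast

lemma adj_iff_mem_neighbours: "finite_simple_graph G \<Longrightarrow> adj G u v \<longleftrightarrow> u \<in> neighbours G v"
  using adj_in_verts mem_neighbours by metis

lemma neighbours_subset_verts: "neighbours G v \<subseteq> verts G"
  by (simp add: neighbours_def)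

lemma finite_neighbours: "finite_simple_graph G \<Longrightarrow> finite (neighbours G v)"
  unfolding finite_simple_graph_def neighbours_def by simp

lemma finite_edges: "finite_simple_graph G \<Longrightarrow> finite (edges G)"
  unfolding finite_simple_graph_def by (meson PowI finite_Pow_iff rev_finite_subset subsetI)

lemma obtain_other_endpoint:
  assumes "finite_simple_graph G" "p \<in> edges G" "z \<in> p"
  obtains y where "p = {z, y}" "adj G z y"
proof -
  have "card p = 2" using assms unfolding finite_simple_graph_def by blast
  then obtain a b where "p = {a, b}" "a \<noteq> b" by (meson card_2_iff)
  then have "p = {z, if z = a then b else a}" using \<open>z \<in> p\<close> by auto
  then show thesis using that \<open>p \<in> edges G\<close> unfolding adj_def by metis
qed

lemma verts_line_graph [simp]: "verts (line_graph G) = edges G"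
  by (simp add: line_graph_def verts_def)

lemma adj_line_graph:
  "adj (line_graph G) p q \<longleftrightarrow> p \<in> edges G \<and> q \<in> edges G \<and> p \<noteq> q \<and> p \<inter> q \<noteq> {}"
  by (auto simp: adj_def line_graph_def edges_def doubleton_eq_iff)

lemma edges_line_graph:
  "edges (line_graph G) = {{p, q} | p q. p \<in> edges G \<and> q \<in> edges G \<and> p \<noteq> q \<and> p \<inter> q \<noteq> {}}"
  by (simp add: line_graph_def edges_def)

lemma finite_simple_graph_line_graph:
  assumes "finite_simple_graph G" shows "finite_simple_graph (line_graph G)"
proof -
  have "card {p, q} = 2" if "p \<noteq> q" for p q :: "'a set" using that by simp
  then show ?thesis using finite_edges[OF assms]
    unfolding finite_simple_graph_def[of "line_graph G"] edges_line_graph verts_line_graph by blast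
qed

lemma doubleton_mem_edges: "adj G u v \<Longrightarrow> {u, v} \<in> edges G"
  by (simp add: adj_def)

lemma neighbours_line_graph:
  "p \<in> neighbours (line_graph G) q \<longleftrightarrow> p \<in> edges G \<and> q \<in> edges G \<and> p \<noteq> q \<and> p \<inter> q \<noteq> {}"
  by (auto simp: mem_neighbours adj_line_graph)

lemma common_neighbours_line_graph:
  assumes G: "finite_simple_graph G" and ef: "adj G e f" and fg: "adj G f g" and "e \<noteq> g"
  shows "neighbours (line_graph G) {e, f} \<inter> neighbours (line_graph G) {f, g} =
           (\<lambda>h. {f, h}) ` neighbours G f - {{e, f}, {f, g}} \<union> (if adj G e g then {{e, g}} else {})"
    (is "?C = ?R")
proof (rule set_eqI)
  have "e \<noteq> f" "f \<noteq> g" using ef fg not_adj_self[OF G] by auto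
  have edges: "{e, f} \<in> edges G" "{f, g} \<in> edges G" using ef fg by (simp_all add: adj_def)
  fix p
  have C: "p \<in> ?C \<longleftrightarrow> p \<in> edges G \<and> p \<noteq> {e, f} \<and> p \<noteq> {f, g} \<and> (f \<in> p \<or> e \<in> p \<and> g \<in> p)"
    using edges by (auto simp: neighbours_line_graph)
  show "p \<in> ?C \<longleftrightarrow> p \<in> ?R"
  proof (cases "p \<in> edges G \<and> f \<in> p")
    case True
    then obtain h where p: "p = {f, h}" "adj G f h"
      using obtain_other_endpoint[OF G] by blast
    have "h \<in> neighbours G f"
      using adj_in_verts[OF G p(2)] p(2) by (simp add: mem_neighbours adj_commute)
    then have "p \<in> (\<lambda>h. {f, h}) ` neighbours G f" using p(1) by blast
    moreover have "p \<noteq> {e, g}" using p(1) \<open>e \<noteq> f\<close> \<open>f \<noteq> g\<close> by (auto simp: doubleton_eq_iff)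
    ultimately show ?thesis using C True by auto
  next
    case False
    have "p \<notin> (\<lambda>h. {f, h}) ` neighbours G f" using False
      by (auto simp: mem_neighbours adj_def insert_commute)
    moreover have "p \<in> edges G \<and> e \<in> p \<and> g \<in> p \<longleftrightarrow> p = {e, g} \<and> adj G e g"
    proof
      assume "p \<in> edges G \<and> e \<in> p \<and> g \<in> p"
      then obtain h where "p = {e, h}" "adj G e h" using obtain_other_endpoint[OF G] by blast
      then show "p = {e, g} \<and> adj G e g" using \<open>e \<noteq> g\<close> \<open>p \<in> edges G \<and> e \<in> p \<and> g \<in> p\<close> by auto
    qed (simp add: adj_def)
    ultimately show ?thesis using C False \<open>e \<noteq> f\<close> \<open>f \<noteq> g\<close> by auto
  qed
qed

lemma card_common_neighbours_line_graph:
  assumes G: "finite_simple_graph G" and ef: "adj G e f" and fg: "adj G f g" and "e \<noteq> g"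
  shows "card (neighbours (line_graph G) {e, f} \<inter> neighbours (line_graph G) {f, g}) =
           card (neighbours G f) - 2 + (if adj G e g then 1 else 0)"
proof -
  have "e \<noteq> f" "f \<noteq> g" using ef fg not_adj_self[OF G] by auto
  have inj: "inj_on (\<lambda>h. {f, h}) (neighbours G f)"
    by (rule inj_onI) (auto simp: doubleton_eq_iff mem_neighbours not_adj_self[OF G])
  have "e \<in> neighbours G f" "g \<in> neighbours G f"
    using ef fg adj_in_verts[OF G] by (auto simp: mem_neighbours adj_commute)
  then have sub: "{{e, f}, {f, g}} \<subseteq> (\<lambda>h. {f, h}) ` neighbours G f"
    by (auto intro: image_eqI[where x = e] simp: insert_commute)
  have "card ((\<lambda>h. {f, h}) ` neighbours G f - {{e, f}, {f, g}}) = card (neighbours G f) - 2"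
    using card_Diff_subset[OF _ sub] card_image[OF inj] \<open>e \<noteq> g\<close> \<open>e \<noteq> f\<close>
    by (simp add: finite_neighbours[OF G] doubleton_eq_iff)
  moreover have "{e, g} \<notin> (\<lambda>h. {f, h}) ` neighbours G f"
    using \<open>e \<noteq> f\<close> \<open>f \<noteq> g\<close> by (auto simp: doubleton_eq_iff)
  ultimately show ?thesis
    using common_neighbours_line_graph[OF assms] finite_neighbours[OF G] by auto
qed

lemma srg_line_graph_adj_iff:
  assumes G: "finite_simple_graph G" and L: "srg_params (line_graph G) n k l m"
    and "adj G e f" "adj G f g" "adj G f g'" "e \<noteq> g" "e \<noteq> g'"
  shows "adj G e g \<longleftrightarrow> adj G e g'"
proof -
  have lambda: "card (neighbours (line_graph G) {e, f} \<inter> neighbours (line_graph G) {f, h}) = l"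
    if "adj G f h" "e \<noteq> h" for h
  proof -
    have "adj (line_graph G) {e, f} {f, h}"
      using \<open>adj G e f\<close> that by (auto simp: adj_line_graph doubleton_mem_edges doubleton_eq_iff)
    then show ?thesis
      using L adj_in_verts[OF finite_simple_graph_line_graph[OF G]] not_adj_self
      unfolding srg_params_def by (metis finite_simple_graph_line_graph[OF G])
  qed
  show ?thesis
    using lambda[of g] lambda[of g'] assms(3-)
      card_common_neighbours_line_graph[OF G \<open>adj G e f\<close>] by (auto split: if_splits)
qed

lemma graph_iso_if_bij_onto:
  assumes bij: "bij_betw \<phi> (verts H) (verts G)"
    and adj: "\<And>x y. x \<in> verts H \<Longrightarrow> y \<in> verts H \<Longrightarrow> adj H x y \<longleftrightarrow> adj G (\<phi> x) (\<phi> y)"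
  shows "graph_iso G H"
proof -
  let ?\<psi> = "inv_into (verts H) \<phi>"
  have "bij_betw ?\<psi> (verts G) (verts H)" using bij by (rule bij_betw_inv_into)
  moreover have "adj G u v \<longleftrightarrow> adj H (?\<psi> u) (?\<psi> v)" if "u \<in> verts G" "v \<in> verts G" for u v
    using that adj[of "?\<psi> u" "?\<psi> v"] bij
    by (simp add: bij_betw_def f_inv_into_f inv_into_into)
  ultimately show ?thesis unfolding graph_iso_def by blast
qed

lemma adj_triangles:
  assumes "j < 3" "j' < 3"
  shows "adj (triangles k) (i, j) (i', j') \<longleftrightarrow> i = i' \<and> i < k \<and> j \<noteq> j'"
proof -
  have "adj (triangles k) (i, j) (i', j') \<longleftrightarrow>
          i = i' \<and> i < k \<and> (j' = (j + 1) mod 3 \<or> j = (j' + 1) mod 3)"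
    using assms unfolding adj_def triangles_def edges_def by (fastforce simp: doubleton_eq_iff)
  also have "(j' = (j + 1) mod 3 \<or> j = (j' + 1) mod 3) \<longleftrightarrow> j \<noteq> j'"
    using assms by (auto simp: mod_Suc)
  finally show ?thesis .
qed

lemma obtain_block_enumeration:
  fixes c :: "'a \<Rightarrow> 'b"
  assumes fin: "finite V" and block_card: "\<And>x. x \<in> V \<Longrightarrow> card {y \<in> V. c y = c x} = 3"
  obtains \<phi> where "bij_betw \<phi> ({0..<card (c ` V)} \<times> {0..<3::nat}) V"
    and "\<And>i j i' j'. i < card (c ` V) \<Longrightarrow> j < 3 \<Longrightarrow> i' < card (c ` V) \<Longrightarrow> j' < 3 \<Longrightarrow>
           c (\<phi> (i, j)) = c (\<phi> (i', j')) \<longleftrightarrow> i = i'"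
proof -
  define k where "k = card (c ` V)"
  define block where "block X = {y \<in> V. c y = X}" for X
  obtain t where t: "bij_betw t {0..<k} (c ` V)"
    using ex_bij_betw_nat_finite fin unfolding k_def by blast
  have "\<forall>X \<in> c ` V. \<exists>h. bij_betw h {0..<3::nat} (block X)"
  proof
    fix X assume "X \<in> c ` V"
    then have "finite (block X)" "card (block X) = 3"
      using fin block_card unfolding block_def by auto
    then show "\<exists>h. bij_betw h {0..<3::nat} (block X)" by (metis ex_bij_betw_nat_finite)
  qed
  then obtain en where en: "\<And>X. X \<in> c ` V \<Longrightarrow> bij_betw (en X) {0..<3::nat} (block X)"
    by metis
  define \<phi> where "\<phi> = (\<lambda>(i, j). en (t i) j)"
  have t_in: "t i \<in> c ` V" if "i < k" for i
    using t that by (auto simp: bij_betw_def)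
  have \<phi>: "\<phi> (i, j) \<in> V \<and> c (\<phi> (i, j)) = t i" if "i < k" "j < 3" for i j
    using bij_betw_apply[OF en[OF t_in[OF \<open>i < k\<close>]]] that by (auto simp: \<phi>_def block_def)
  have "inj_on \<phi> ({0..<k} \<times> {0..<3})"
  proof (rule inj_onI, clarsimp)
    fix i j i' j' assume *: "i < k" "j < 3" "i' < k" "j' < 3" "\<phi> (i, j) = \<phi> (i', j')"
    then have "t i = t i'" using \<phi> by metis
    then have "i = i'" using t * by (auto simp: bij_betw_def inj_on_def)
    then show "i = i' \<and> j = j'"
      using en[OF t_in[OF \<open>i < k\<close>]] * by (auto simp: \<phi>_def bij_betw_def inj_on_def)
  qed
  moreover have "V \<subseteq> \<phi> ` ({0..<k} \<times> {0..<3})"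
  proof
    fix x assume x: "x \<in> V"
    then obtain i where i: "i < k" "t i = c x" using t by (force simp: bij_betw_def)
    then have "x \<in> en (t i) ` {0..<3}"
      using en[OF t_in[OF \<open>i < k\<close>]] x by (simp add: bij_betw_def block_def)
    then show "x \<in> \<phi> ` ({0..<k} \<times> {0..<3})" using i(1) by (force simp: \<phi>_def)
  qed
  ultimately have "bij_betw \<phi> ({0..<k} \<times> {0..<3}) V"
    using \<phi> by (auto simp: bij_betw_def)
  moreover have "c (\<phi> (i, j)) = c (\<phi> (i', j')) \<longleftrightarrow> i = i'"
    if "i < k" "j < 3" "i' < k" "j' < 3" for i j i' j'
    using \<phi> that t by (auto simp: bij_betw_def inj_on_eq_iff)
  ultimately show thesis using that unfolding k_def by blast
qed

lemma graph_iso_triangles_if_adj_iff_same_block: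
  fixes c :: "'a \<Rightarrow> 'b"
  assumes fin: "finite (verts G)"
    and block_card: "\<And>x. x \<in> verts G \<Longrightarrow> card {y \<in> verts G. c y = c x} = 3"
    and adj: "\<And>x y. x \<in> verts G \<Longrightarrow> y \<in> verts G \<Longrightarrow> adj G x y \<longleftrightarrow> x \<noteq> y \<and> c x = c y"
  shows "graph_iso G (triangles (card (c ` verts G)))"
proof -
  define k where "k = card (c ` verts G)"
  obtain \<phi> where bij: "bij_betw \<phi> ({0..<k} \<times> {0..<3::nat}) (verts G)"
    and same_block: "\<And>i j i' j'. i < k \<Longrightarrow> j < 3 \<Longrightarrow> i' < k \<Longrightarrow> j' < 3 \<Longrightarrow>
           c (\<phi> (i, j)) = c (\<phi> (i', j')) \<longleftrightarrow> i = i'"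
    using obtain_block_enumeration[OF fin block_card, folded k_def] by blast
  have verts_triangles: "verts (triangles k) = {0..<k} \<times> {0..<3}"
    by (simp add: triangles_def verts_def)
  show ?thesis unfolding k_def[symmetric]
  proof (rule graph_iso_if_bij_onto)
    show "bij_betw \<phi> (verts (triangles k)) (verts G)" using bij by (simp add: verts_triangles)
    fix p q assume p: "p \<in> verts (triangles k)" and q: "q \<in> verts (triangles k)"
    then obtain i j i' j' where pq: "p = (i, j)" "q = (i', j')" "i < k" "j < 3" "i' < k" "j' < 3"
      by (auto simp: verts_triangles)
    have in_verts: "\<phi> p \<in> verts G" "\<phi> q \<in> verts G"
      using bij p q unfolding verts_triangles by (auto intro: bij_betw_apply)
    have "\<phi> p = \<phi> q \<longleftrightarrow> p = q"
      using p q unfolding verts_triangles by (intro inj_on_eq_iff[OF bij_betw_imp_inj_on[OF bij]])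
    then have "adj G (\<phi> p) (\<phi> q) \<longleftrightarrow> p \<noteq> q \<and> c (\<phi> p) = c (\<phi> q)"
      using adj[OF in_verts] by simp
    also have "\<dots> \<longleftrightarrow> p \<noteq> q \<and> i = i'" using same_block[OF pq(3-6)] pq(1,2) by simp
    also have "\<dots> \<longleftrightarrow> adj (triangles k) p q" using adj_triangles[OF pq(4,6), of k i i'] pq by auto
    finally show "adj (triangles k) p q \<longleftrightarrow> adj G (\<phi> p) (\<phi> q)" by simp
  qed
qed

lemma adj_cycle_graph:
  assumes "i < n" "j < n"
  shows "adj (cycle_graph n) i j \<longleftrightarrow> j = (i + 1) mod n \<or> i = (j + 1) mod n"
proof
  assume "adj (cycle_graph n) i j"
  then obtain t where "{i, j} = {t, (t + 1) mod n}"
    unfolding adj_def cycle_graph_def edges_def by auto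
  then show "j = (i + 1) mod n \<or> i = (j + 1) mod n" by (auto simp: doubleton_eq_iff)
next
  assume "j = (i + 1) mod n \<or> i = (j + 1) mod n"
  then show "adj (cycle_graph n) i j"
    unfolding adj_def cycle_graph_def edges_def using assms by (auto simp: insert_commute)
qed

text \<open>The two neighbours of \<open>xs ! i\<close> along the cycle already exhaust its degree.\<close>

lemma graph_iso_cycle_graph_if_hamiltonian:
  assumes G: "finite_simple_graph G" and deg: "\<And>v. v \<in> verts G \<Longrightarrow> card (neighbours G v) = 2"
    and xs: "distinct xs" "set xs = verts G" "3 \<le> length xs"
    and cycle: "list_all2 (adj G) xs (rotate1 xs)"
  shows "graph_iso G (cycle_graph (length xs))"
proof -
  define n where "n = length xs"
  have succ: "adj G (xs ! i) (xs ! ((i + 1) mod n))" if "i < n" for i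
    using cycle that by (simp add: list_all2_conv_all_nth nth_rotate1 n_def)
  have adj_iff: "adj G (xs ! i) (xs ! j) \<longleftrightarrow> j = (i + 1) mod n \<or> i = (j + 1) mod n"
    if "i < n" "j < n" for i j
  proof
    assume ij: "adj G (xs ! i) (xs ! j)"
    define p where "p = (if i = 0 then n - 1 else i - 1)"
    have p: "p < n" "(p + 1) mod n = i" "(i + 1) mod n \<noteq> p" "(i + 1) mod n < n"
      using that xs(3) by (auto simp: p_def n_def mod_Suc)
    have "xs ! ((i + 1) mod n) \<in> neighbours G (xs ! i)" "xs ! p \<in> neighbours G (xs ! i)"
      using succ[OF \<open>i < n\<close>] succ[OF \<open>p < n\<close>] p(2) G
      by (simp_all add: adj_iff_mem_neighbours[symmetric] adj_commute)
    moreover have "xs ! ((i + 1) mod n) \<noteq> xs ! p"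
      using p that xs(1) by (simp add: nth_eq_iff_index_eq n_def)
    moreover have "xs ! i \<in> verts G" using nth_mem[of i xs] that xs(2) unfolding n_def by blast
    ultimately have "{xs ! ((i + 1) mod n), xs ! p} = neighbours G (xs ! i)"
      using deg by (intro card_subset_eq finite_neighbours[OF G]) auto
    moreover have "xs ! j \<in> neighbours G (xs ! i)"
      using ij G by (simp add: adj_iff_mem_neighbours[symmetric] adj_commute)
    ultimately have "xs ! j = xs ! ((i + 1) mod n) \<or> xs ! j = xs ! p" by blast
    then have "j = (i + 1) mod n \<or> j = p"
      using p that xs(1) by (simp add: nth_eq_iff_index_eq n_def)
    then show "j = (i + 1) mod n \<or> i = (j + 1) mod n" using p(2) by blast
  next
    assume "j = (i + 1) mod n \<or> i = (j + 1) mod n"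
    then show "adj G (xs ! i) (xs ! j)" using succ that adj_commute by metis
  qed
  have verts_cycle: "verts (cycle_graph n) = {0..<n}" by (simp add: cycle_graph_def verts_def)
  show ?thesis unfolding n_def[symmetric]
  proof (rule graph_iso_if_bij_onto[where \<phi> = "(!) xs"])
    show "bij_betw ((!) xs) (verts (cycle_graph n)) (verts G)"
      unfolding verts_cycle by (rule bij_betw_nth) (use xs in \<open>auto simp: n_def\<close>)
  qed (simp add: verts_cycle adj_cycle_graph adj_iff)
qed

lemma srg_params_verts_nonempty: "srg_params G n k l m \<Longrightarrow> verts G \<noteq> {}"
  by (auto simp: srg_params_def)

lemma srg_verts_within_distance_two:
  assumes srg: "srg_params G n k l m" and "1 \<le> m" and v: "v \<in> verts G"
  shows "verts G \<subseteq> insert v (neighbours G v \<union> (\<Union>u \<in> neighbours G v. neighbours G u))"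
proof
  fix z assume z: "z \<in> verts G"
  have G: "finite_simple_graph G" using srg by (simp add: srg_params_def)
  show "z \<in> insert v (neighbours G v \<union> (\<Union>u \<in> neighbours G v. neighbours G u))"
  proof (cases "z = v \<or> adj G z v")
    case True
    then show ?thesis using z by (auto simp: mem_neighbours)
  next
    case False
    then have "card (neighbours G z \<inter> neighbours G v) = m"
      using srg z v unfolding srg_params_def by blast
    then have "neighbours G z \<inter> neighbours G v \<noteq> {}" using \<open>1 \<le> m\<close> by auto
    then obtain u where "u \<in> neighbours G z" "u \<in> neighbours G v" by blast
    then show ?thesis using z G by (auto simp: mem_neighbours adj_commute)
  qed
qed

locale two_regular_srg =
  fixes G :: "'a graph" and n l m :: nat
  assumes srg: "srg_params G n 2 l m"
begin

lemma simple_graph: "finite_simple_graph G"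
  using srg by (simp add: srg_params_def)

lemma degree: "v \<in> verts G \<Longrightarrow> card (neighbours G v) = 2"
  using srg by (simp add: srg_params_def)

lemma verts_nonempty: "verts G \<noteq> {}"
  using srg_params_verts_nonempty[OF srg] .

lemma card_common_neighbours_adj: "adj G u v \<Longrightarrow> card (neighbours G u \<inter> neighbours G v) = l"
  using srg adj_in_verts[OF simple_graph] not_adj_self[OF simple_graph] unfolding srg_params_def by metis

lemma card_common_neighbours_not_adj:
  "u \<in> verts G \<Longrightarrow> v \<in> verts G \<Longrightarrow> u \<noteq> v \<Longrightarrow> \<not> adj G u v \<Longrightarrow>
     card (neighbours G u \<inter> neighbours G v) = m"
  using srg unfolding srg_params_def by blast

lemma adj_iff: "adj G u v \<longleftrightarrow> u \<in> neighbours G v"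
  using adj_iff_mem_neighbours[OF simple_graph] .

lemma neighbours_sym: "u \<in> neighbours G v \<longleftrightarrow> v \<in> neighbours G u"
  using adj_iff adj_commute by metis

lemma not_mem_neighbours_self: "v \<notin> neighbours G v"
  using not_adj_self[OF simple_graph] adj_iff by blast

lemma neighbours_eq_doubleton:
  assumes "v \<in> verts G" "x \<in> neighbours G v" "y \<in> neighbours G v" "x \<noteq> y"
  shows "neighbours G v = {x, y}"
proof -
  have "{x, y} = neighbours G v"
    using assms degree by (intro card_subset_eq finite_neighbours[OF simple_graph]) auto
  then show ?thesis by simp
qed

lemma obtain_other_neighbour:
  assumes "v \<in> verts G" "x \<in> neighbours G v"
  obtains y where "neighbours G v = {x, y}" "y \<noteq> x"
proof -
  obtain a b where "neighbours G v = {a, b}" "a \<noteq> b"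
    using degree[OF assms(1)] by (meson card_2_iff)
  then have "neighbours G v = {x, if x = a then b else a}" using assms(2) by auto
  then show thesis using that \<open>a \<noteq> b\<close> by (metis (full_types))
qed

text \<open>A triangle forces \<open>\<lambda> = 1\<close>, so every vertex forms a triangle with its two
  neighbours; these closed neighbourhoods \<open>T w\<close> are the blocks of the disjoint triangles.\<close>

lemma graph_iso_triangles_if_triangle:
  assumes xy: "adj G x y" and yz: "adj G y z" and xz: "adj G x z"
  shows "\<exists>k\<ge>1. graph_iso G (triangles k)"
proof -
  define T where "T w = insert w (neighbours G w)" for w
  have x: "x \<in> verts G" using adj_in_verts[OF simple_graph xy] by blast
  have "y \<in> neighbours G x" "z \<in> neighbours G x" "y \<noteq> z"
    using xy xz yz not_adj_self[OF simple_graph] by (auto simp: adj_iff[symmetric] adj_commute)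
  then have "neighbours G x = {y, z}" using neighbours_eq_doubleton[OF x] by blast
  then have "neighbours G x \<inter> neighbours G y = {z}"
    using yz not_mem_neighbours_self neighbours_sym[of z y] by (auto simp: adj_iff)
  then have "l = 1" using card_common_neighbours_adj[OF xy] by simp
  have closed: "adj G p q" if "w \<in> verts G" "neighbours G w = {p, q}" for w p q
  proof -
    have "adj G p w" using that by (simp add: adj_iff)
    then have "neighbours G p \<inter> neighbours G w \<noteq> {}"
      using card_common_neighbours_adj \<open>l = 1\<close> by fastforce
    moreover have "neighbours G p \<inter> neighbours G w \<subseteq> {q}"
      using that not_mem_neighbours_self by auto
    ultimately have "q \<in> neighbours G p" by blast
    then show ?thesis by (simp add: adj_iff[symmetric] adj_commute)
  qed
  have T_eq: "T u = T w" if w: "w \<in> verts G" and "u \<in> T w" for u w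
  proof (cases "u = w")
    case False
    then have u: "u \<in> neighbours G w" using that by (simp add: T_def)
    obtain q where Nw: "neighbours G w = {u, q}" "q \<noteq> u"
      using obtain_other_neighbour[OF w u] by blast
    have "q \<in> neighbours G u" using closed[OF w Nw(1)] by (simp add: adj_commute adj_iff)
    moreover have "w \<in> neighbours G u" using u by (simp add: adj_iff[symmetric] adj_commute)
    moreover have "w \<noteq> q" using Nw not_mem_neighbours_self by auto
    moreover have "u \<in> verts G" using u neighbours_subset_verts[of G w] by blast
    ultimately have "neighbours G u = {w, q}" using neighbours_eq_doubleton by blast
    then show ?thesis using Nw by (auto simp: T_def)
  qed simp
  have T_verts: "T w \<subseteq> verts G" if "w \<in> verts G" for w
    using that neighbours_subset_verts[of G] by (auto simp: T_def)
  have T_self: "w \<in> T w" for w by (simp add: T_def)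
  have finite_verts: "finite (verts G)" using simple_graph by (simp add: finite_simple_graph_def)
  have "graph_iso G (triangles (card (T ` verts G)))"
  proof (rule graph_iso_triangles_if_adj_iff_same_block[OF finite_verts])
    show "card {u \<in> verts G. T u = T w} = 3" if "w \<in> verts G" for w
    proof -
      have "{u \<in> verts G. T u = T w} = T w"
        using T_eq[OF that] T_verts[OF that] T_self by blast
      then show ?thesis
        using degree[OF that] finite_neighbours[OF simple_graph] not_mem_neighbours_self
        by (simp add: T_def)
    qed
    show "adj G u w \<longleftrightarrow> u \<noteq> w \<and> T u = T w" if "w \<in> verts G" for u w
    proof
      assume "adj G u w"
      then have "u \<in> T w" by (simp add: adj_iff T_def)
      then show "u \<noteq> w \<and> T u = T w" using T_eq[OF that] not_adj_self[OF simple_graph] \<open>adj G u w\<close> by blast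
    next
      assume "u \<noteq> w \<and> T u = T w"
      then have "u \<in> neighbours G w" using T_self[of u] by (simp add: T_def)
      then show "adj G u w" by (simp add: adj_iff)
    qed
  qed
  moreover have "1 \<le> card (T ` verts G)"
    using x finite_verts by (auto simp: Suc_le_eq card_gt_0_iff)
  ultimately show ?thesis by blast
qed

lemma graph_iso_cycle_if_triangle_free:
  assumes triangle_free: "\<And>x y z. adj G x y \<Longrightarrow> adj G y z \<Longrightarrow> \<not> adj G x z"
  shows "graph_iso G (cycle_graph 4) \<or> graph_iso G (cycle_graph 5)"
proof -
  obtain v where v: "v \<in> verts G" using verts_nonempty by blast
  obtain a b where Nv: "neighbours G v = {a, b}" "a \<noteq> b"
    using degree[OF v] by (meson card_2_iff)
  have a: "a \<in> verts G" "v \<in> neighbours G a" and b: "b \<in> verts G" "v \<in> neighbours G b"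
    using Nv neighbours_subset_verts[of G v] neighbours_sym[of v a] neighbours_sym[of v b] by auto
  have "\<not> adj G a b" using triangle_free[of a v b] Nv b(2) by (simp add: adj_iff)
  then have "card (neighbours G a \<inter> neighbours G b) = m"
    using card_common_neighbours_not_adj a b Nv by blast
  moreover have "v \<in> neighbours G a \<inter> neighbours G b" using a(2) b(2) by blast
  ultimately have "1 \<le> m"
    using finite_neighbours[OF simple_graph] card_gt_0_iff[of "neighbours G a \<inter> neighbours G b"] by auto
  obtain c where Na: "neighbours G a = {v, c}" "c \<noteq> v" using obtain_other_neighbour a by blast
  obtain d where Nb: "neighbours G b = {v, d}" "d \<noteq> v" using obtain_other_neighbour b by blast
  have "c \<noteq> a" "d \<noteq> b" "v \<noteq> a" "v \<noteq> b" using Na Nb Nv not_mem_neighbours_self by auto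
  have "c \<noteq> b" "d \<noteq> a"
    using Na Nb \<open>\<not> adj G a b\<close> neighbours_sym[of b a] by (auto simp: adj_iff)
  have verts: "verts G = {v, a, c, d, b}"
  proof
    show "verts G \<subseteq> {v, a, c, d, b}"
      using srg_verts_within_distance_two[OF srg \<open>1 \<le> m\<close> v] Nv Na Nb by auto
    show "{v, a, c, d, b} \<subseteq> verts G"
      using v a b Na Nb neighbours_subset_verts[of G a] neighbours_subset_verts[of G b] by auto
  qed
  have adj_cycle: "adj G v a" "adj G a c" "adj G b v" "adj G d b"
    using Nv Na Nb a(2) neighbours_sym[of c a] by (auto simp: adj_iff)
  show ?thesis
  proof (cases "c = d")
    case True
    have "adj G c b" using True Nb by (simp add: adj_iff)
    have "graph_iso G (cycle_graph (length [v, a, c, b]))"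
      using Nv(2) \<open>v \<noteq> a\<close> \<open>v \<noteq> b\<close> \<open>c \<noteq> v\<close> \<open>c \<noteq> a\<close> \<open>c \<noteq> b\<close>
        adj_cycle \<open>adj G c b\<close> True verts
      by (intro graph_iso_cycle_graph_if_hamiltonian[OF simple_graph degree]) auto
    then show ?thesis by (simp add: numeral_eq_Suc)
  next
    case False
    have "\<not> adj G c b" using Nb False \<open>c \<noteq> v\<close> by (simp add: adj_iff)
    moreover have "c \<in> verts G" using verts by simp
    ultimately have "card (neighbours G c \<inter> neighbours G b) = m"
      using card_common_neighbours_not_adj b(1) \<open>c \<noteq> b\<close> by blast
    then have "neighbours G c \<inter> neighbours G b \<noteq> {}"
      using \<open>1 \<le> m\<close> by (metis card.empty not_one_le_zero)
    moreover have "v \<notin> neighbours G c"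
      using Nv \<open>c \<noteq> a\<close> \<open>c \<noteq> b\<close> neighbours_sym[of v c] by auto
    ultimately have "adj G c d" using Nb neighbours_sym[of d c] by (auto simp: adj_iff)
    have "graph_iso G (cycle_graph (length [v, a, c, d, b]))"
      using Nv(2) \<open>v \<noteq> a\<close> \<open>v \<noteq> b\<close> \<open>c \<noteq> v\<close> \<open>d \<noteq> v\<close> \<open>c \<noteq> a\<close> \<open>d \<noteq> a\<close>
        \<open>c \<noteq> b\<close> \<open>d \<noteq> b\<close>
        False adj_cycle \<open>adj G c d\<close> verts
      by (intro graph_iso_cycle_graph_if_hamiltonian[OF simple_graph degree]) auto
    then show ?thesis by (simp add: numeral_eq_Suc)
  qed
qed

lemma graph_iso_cases:
  "graph_iso G (cycle_graph 4) \<or> graph_iso G (cycle_graph 5) \<or> (\<exists>k\<ge>1. graph_iso G (triangles k))"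
  using graph_iso_triangles_if_triangle graph_iso_cycle_if_triangle_free by blast

end

lemma ex_in_diff_if_card_less: "finite B \<Longrightarrow> card B < card A \<Longrightarrow> \<exists>x \<in> A. x \<notin> B"
  by (meson card_mono not_le subsetI)

lemma obtain_vertex_of_degree_ge_2:
  assumes G: "finite_simple_graph G" and "edges (line_graph G) \<noteq> {}"
  obtains z where "z \<in> verts G" "2 \<le> card (neighbours G z)"
proof -
  obtain p q where pq: "p \<in> edges G" "q \<in> edges G" "p \<noteq> q" "p \<inter> q \<noteq> {}"
    using assms(2) unfolding edges_line_graph by blast
  then obtain z where "z \<in> p" "z \<in> q" by blast
  obtain b c where p: "p = {z, b}" "adj G z b" and q: "q = {z, c}" "adj G z c"
    using obtain_other_endpoint[OF G pq(1) \<open>z \<in> p\<close>] obtain_other_endpoint[OF G pq(2) \<open>z \<in> q\<close>] by metis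
  have "{b, c} \<subseteq> neighbours G z"
    using p(2) q(2) adj_in_verts[OF G] by (auto simp: mem_neighbours adj_commute)
  moreover have "b \<noteq> c" using p q pq(3) by blast
  ultimately have "2 \<le> card (neighbours G z)"
    using card_mono[OF finite_neighbours[OF G], of "{b, c}" z] by simp
  then show thesis using that adj_in_verts[OF G p(2)] by blast
qed

text \<open>A vertex \<open>z\<close> with three neighbours \<open>u, w, x\<close>, where \<open>w\<close> has a further neighbour
  \<open>y \<notin> {u, z}\<close>, yields in the line graph a vertex \<open>zw\<close> with neighbours \<open>uz, zx, wy\<close>, where
  \<open>uz\<close> is adjacent to \<open>zx\<close> but not to \<open>wy\<close>; so the second line graph has no constant \<open>\<lambda>\<close>.\<close>

lemma not_srg_line_graph_line_graph_if_min_degree_3: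
  assumes G: "finite_simple_graph G" and "verts G \<noteq> {}"
    and deg: "\<And>v. v \<in> verts G \<Longrightarrow> 3 \<le> card (neighbours G v)"
  shows "\<not> strongly_regular (line_graph (line_graph G))"
proof
  assume "strongly_regular (line_graph (line_graph G))"
  then obtain n k l m where L: "srg_params (line_graph (line_graph G)) n k l m"
    unfolding strongly_regular_def by blast
  have another: "\<exists>x \<in> neighbours G v. x \<notin> B" if "v \<in> verts G" "finite B" "card B \<le> 2" for v B
    using ex_in_diff_if_card_less[OF that(2)] deg[OF that(1)] that(3) by simp
  obtain z where z: "z \<in> verts G" using assms(2) by blast
  obtain w where w: "w \<in> neighbours G z" using another[OF z, of "{}"] by auto
  obtain u where u: "u \<in> neighbours G z" "u \<noteq> w" using another[OF z, of "{w}"] by auto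
  obtain x where x: "x \<in> neighbours G z" "x \<noteq> u" "x \<noteq> w"
    using another[OF z, of "{u, w}"] by (cases "u = w") auto
  have "w \<in> verts G" using w by (simp add: mem_neighbours)
  then obtain y where y: "y \<in> neighbours G w" "y \<noteq> u" "y \<noteq> z"
    using another[of w "{u, z}"] by (cases "u = z") auto
  have adj: "adj G u z" "adj G z w" "adj G z x" "adj G w y"
    using u w x y by (auto simp: mem_neighbours adj_commute)
  then have "z \<noteq> w" "z \<noteq> u" using not_adj_self[OF G] by auto
  let ?H = "line_graph G"
  have "adj ?H {u, z} {z, x} \<longleftrightarrow> adj ?H {u, z} {w, y}"
  proof (rule srg_line_graph_adj_iff[OF finite_simple_graph_line_graph[OF G] L])
    show "adj ?H {u, z} {z, w}" "adj ?H {z, w} {z, x}" "adj ?H {z, w} {w, y}"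
      using adj u x y \<open>z \<noteq> w\<close>
      by (auto simp: adj_line_graph doubleton_mem_edges doubleton_eq_iff)
    show "{u, z} \<noteq> {z, x}" "{u, z} \<noteq> {w, y}" using u x y by (auto simp: doubleton_eq_iff)
  qed
  moreover have "adj ?H {u, z} {z, x}"
    using adj x by (auto simp: adj_line_graph doubleton_mem_edges doubleton_eq_iff)
  moreover have "\<not> adj ?H {u, z} {w, y}"
    using u y \<open>z \<noteq> w\<close> by (auto simp: adj_line_graph)
  ultimately show False by blast
qed

theorem mainTheorem10:
  fixes G :: "'a graph"
  assumes "finite_simple_graph G"
    and "strongly_regular G"
    and "\<not> graph_iso G (cycle_graph 3)"
    and "\<not> graph_iso G (cycle_graph 4)"
    and "\<not> graph_iso G (cycle_graph 5)"
    and "\<not> (\<exists>k\<ge>1. graph_iso G (triangles k))"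
  shows "\<not> strongly_regular G \<or> \<not> strongly_regular (line_graph G)
         \<or> \<not> strongly_regular (line_graph (line_graph G))"
proof (rule ccontr)
  assume "\<not> ?thesis"
  then have LL: "strongly_regular (line_graph (line_graph G))" by blast
  obtain n k l m where srg: "srg_params G n k l m"
    using assms(2) unfolding strongly_regular_def by blast
  then have deg: "\<And>v. v \<in> verts G \<Longrightarrow> card (neighbours G v) = k"
    by (simp add: srg_params_def)
  obtain n' k' l' m' where "srg_params (line_graph (line_graph G)) n' k' l' m'"
    using LL unfolding strongly_regular_def by blast
  then have "edges (line_graph G) \<noteq> {}" using srg_params_verts_nonempty by fastforce
  then obtain z where "z \<in> verts G" "2 \<le> card (neighbours G z)"
    using obtain_vertex_of_degree_ge_2[OF assms(1)] by blast
  then have "2 \<le> k" using deg by simp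
  show False
  proof (cases "k = 2")
    case True
    then interpret two_regular_srg G n l m using srg by unfold_locales simp
    show False using graph_iso_cases assms(4-6) by blast
  next
    case False
    then have "\<not> strongly_regular (line_graph (line_graph G))"
      using \<open>2 \<le> k\<close> deg
      by (intro not_srg_line_graph_line_graph_if_min_degree_3[OF assms(1) srg_params_verts_nonempty[OF srg]])
        simp
    then show False using LL by blast
  qed
qed

end
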